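(* Let $(B^{*,*},\delta_h,\delta_v)$ be a bicomplex of vector spaces ($\delta_h:B^{p,q}\to B^{p+1,q}$, $\delta_v:B^{p,q}\to B^{p,q+1}$, $\delta_h^2=\delta_v^2=\delta_h\delta_v+\delta_v\delta_h=0$) such that (i) $B^{p,q}=0$ unless $0\le -p\le q$, (ii) $B^{p,*}=0$ for $p$ sufficiently negative, and (iii) $H^p(B^{*,q},\delta_h)=0$ whenever $p+q\ne0$. Let $Z_h^n$, $D^n$, $\pi_n$, $X^n$, $U$ and $\beta$ be as in the context. Then for each $n\geq 0$ and $z\in Z_h^n$, the element $\beta(z)\in\bigoplus_{p\geq n}B^{-p,p}$ is a degree $0$ cocycle of the total complex $(B^*,\delta_h+\delta_v)$, $B^k=\bigoplus_{p+q=k}B^{p,q}$. Consequently, for every $z\in Z_h^n$, $\beta(z)$ is a cocycle of the total complex with $\beta(z)-z\in\bigoplus_{p>n}B^{-p,p}$.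
   Context: $Z_h^n:=\ker(\delta_h:B^{-n,n}\to B^{-n+1,n})$. For each $n\ge0$ choose a complementary subspace $D^n$ with $B^{-n,n}=Z_h^n\oplus D^n$, and let $\pi_n:B^{-n,n}\to D^n$ be the projection along $Z_h^n$. Let $X^n:=\ker(\delta_v\delta_h:B^{-n,n}\to B^{-n+1,n+1})$. For $x\in X^n$ define $U(x):=\pi_{n+1}(u)$ where $u\in B^{-n-1,n+1}$ is any element with $\delta_h u=\delta_v x$ (such $u$ exists and $U(x)$ does not depend on its choice, and $U(x)\in X^{n+1}$). For $z\in Z_h^n$ define $\beta(z):=z-U(z)+U^2(z)-U^3(z)+\cdots$ (a finite sum). *)

theory Defs
  imports Complex_Main
begin

text \<open>A bigraded family of vector spaces is modelled as a family of subspaces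
  B p q of an ambient vector space (type 'v, scalars 'k via scale), together
  with families of maps dh p q : B p q -> B (p+1) q and dv p q : B p q -> B p (q+1).
  A cochain of total degree k is a function c :: int => 'v with c p in B p (k - p)
  (finitely supported).\<close>

definition Zh :: "(int \<Rightarrow> int \<Rightarrow> 'v set) \<Rightarrow> (int \<Rightarrow> int \<Rightarrow> 'v \<Rightarrow> 'v::ab_group_add) \<Rightarrow> nat \<Rightarrow> 'v set" where
  "Zh B dh n = {x \<in> B (- int n) (int n). dh (- int n) (int n) x = 0}"

definition proj :: "(int \<Rightarrow> int \<Rightarrow> 'v set) \<Rightarrow> (int \<Rightarrow> int \<Rightarrow> 'v \<Rightarrow> 'v::ab_group_add) \<Rightarrow> (nat \<Rightarrow> 'v set) \<Rightarrow> nat \<Rightarrow> 'v \<Rightarrow> 'v" where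
  "proj B dh D n b = (THE d. d \<in> D n \<and> b - d \<in> Zh B dh n)"

definition Uop :: "(int \<Rightarrow> int \<Rightarrow> 'v set) \<Rightarrow> (int \<Rightarrow> int \<Rightarrow> 'v \<Rightarrow> 'v::ab_group_add) \<Rightarrow> (int \<Rightarrow> int \<Rightarrow> 'v \<Rightarrow> 'v)
     \<Rightarrow> (nat \<Rightarrow> 'v set) \<Rightarrow> nat \<Rightarrow> 'v \<Rightarrow> 'v" where
  "Uop B dh dv D n x = proj B dh D (Suc n)
     (SOME u. u \<in> B (- int n - 1) (int n + 1) \<and> dh (- int n - 1) (int n + 1) u = dv (- int n) (int n) x)"

fun Uiter :: "(int \<Rightarrow> int \<Rightarrow> 'v set) \<Rightarrow> (int \<Rightarrow> int \<Rightarrow> 'v \<Rightarrow> 'v::ab_group_add) \<Rightarrow> (int \<Rightarrow> int \<Rightarrow> 'v \<Rightarrow> 'v)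
     \<Rightarrow> (nat \<Rightarrow> 'v set) \<Rightarrow> nat \<Rightarrow> nat \<Rightarrow> 'v \<Rightarrow> 'v" where
  "Uiter B dh dv D n 0 z = z"
| "Uiter B dh dv D n (Suc k) z = Uop B dh dv D (n + k) (Uiter B dh dv D n k z)"

text \<open>beta(z) = z - U z + U^2 z - ..., as a total cochain of degree 0:
  its component in B^{p,-p} (p = -(n+k)) is (-1)^k U^k z, all other components are 0.\<close>
definition beta :: "(int \<Rightarrow> int \<Rightarrow> 'v set) \<Rightarrow> (int \<Rightarrow> int \<Rightarrow> 'v \<Rightarrow> 'v::ab_group_add) \<Rightarrow> (int \<Rightarrow> int \<Rightarrow> 'v \<Rightarrow> 'v)
     \<Rightarrow> (nat \<Rightarrow> 'v set) \<Rightarrow> nat \<Rightarrow> 'v \<Rightarrow> int \<Rightarrow> 'v" where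
  "beta B dh dv D n z p =
     (if p \<le> - int n then
        (let k = nat (- p - int n) in
          (if even k then Uiter B dh dv D n k z else - Uiter B dh dv D n k z))
      else 0)"

definition totald :: "(int \<Rightarrow> int \<Rightarrow> 'v \<Rightarrow> 'v::ab_group_add) \<Rightarrow> (int \<Rightarrow> int \<Rightarrow> 'v \<Rightarrow> 'v)
     \<Rightarrow> int \<Rightarrow> (int \<Rightarrow> 'v) \<Rightarrow> int \<Rightarrow> 'v" where
  "totald dh dv k c p = dh (p - 1) (k - (p - 1)) (c (p - 1)) + dv p (k - p) (c p)"

definition is_total_cochain :: "(int \<Rightarrow> int \<Rightarrow> 'v set) \<Rightarrow> int \<Rightarrow> (int \<Rightarrow> 'v::zero) \<Rightarrow> bool" where
  "is_total_cochain B k c \<longleftrightarrow> (\<forall>p. c p \<in> B p (k - p)) \<and> finite {p. c p \<noteq> 0}"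

end

theory Submission
  imports Defs
begin

text \<open>Horizontal exactness in total degree 1 lets U lift dv x through dh, so that
  dh (U^(k+1) z) = dv (U^k z). In the total differential of the alternating sum beta z the
  component in B^(-(n+k), n+k+1) is therefore \<plusminus>(dv (U^k z) - dh (U^(k+1) z)) = 0, while
  the top component is dh z = 0. Finiteness of beta z comes from the vanishing of B^(p,*)
  for p very negative.\<close>

lemma le_minus_int_cases:
  assumes "p \<le> - int n"
  obtains k where "p = - int (n + k)"
proof
  show "p = - int (n + nat (- p - int n))"
    using assms by simp
qed

lemma beta_eq_0_above: "- int n < p \<Longrightarrow> beta B dh dv D n z p = 0"
  unfolding beta_def by simp

lemma beta_at: "beta B dh dv D n z (- int (n + k))
    = (if even k then Uiter B dh dv D n k z else - Uiter B dh dv D n k z)"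
  unfolding beta_def by (simp add: Let_def)

locale bicomplex =
  fixes B :: "int \<Rightarrow> int \<Rightarrow> 'v::ab_group_add set"
    and dh dv :: "int \<Rightarrow> int \<Rightarrow> 'v \<Rightarrow> 'v"
  assumes zero_mem: "0 \<in> B p q"
    and diff_mem: "x \<in> B p q \<Longrightarrow> y \<in> B p q \<Longrightarrow> x - y \<in> B p q"
    and dh_maps: "x \<in> B p q \<Longrightarrow> dh p q x \<in> B (p + 1) q"
    and dv_maps: "x \<in> B p q \<Longrightarrow> dv p q x \<in> B p (q + 1)"
    and dh_add: "x \<in> B p q \<Longrightarrow> y \<in> B p q \<Longrightarrow> dh p q (x + y) = dh p q x + dh p q y"
    and dv_add: "x \<in> B p q \<Longrightarrow> y \<in> B p q \<Longrightarrow> dv p q (x + y) = dv p q x + dv p q y"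
    and dv_dv: "x \<in> B p q \<Longrightarrow> dv p (q + 1) (dv p q x) = 0"
    and dh_dv_anticomm: "x \<in> B p q \<Longrightarrow> dh p (q + 1) (dv p q x) + dv (p + 1) q (dh p q x) = 0"
begin

lemma minus_mem: "x \<in> B p q \<Longrightarrow> - x \<in> B p q"
  using diff_mem[OF zero_mem] by fastforce

lemma dh_zero [simp]: "dh p q 0 = 0"
  using dh_add[OF zero_mem zero_mem] by simp

lemma dv_zero [simp]: "dv p q 0 = 0"
  using dv_add[OF zero_mem zero_mem] by simp

lemma dh_minus: "x \<in> B p q \<Longrightarrow> dh p q (- x) = - dh p q x"
  using dh_add[OF _ minus_mem, of x p q x] by (simp add: add_eq_0_iff)

lemma dv_minus: "x \<in> B p q \<Longrightarrow> dv p q (- x) = - dv p q x"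
  using dv_add[OF _ minus_mem, of x p q x] by (simp add: add_eq_0_iff)

lemma dh_diff: "x \<in> B p q \<Longrightarrow> y \<in> B p q \<Longrightarrow> dh p q (x - y) = dh p q x - dh p q y"
  using dh_add[OF _ minus_mem, of x p q y] dh_minus[of y p q] by simp

lemma Zh_diff: "x \<in> Zh B dh m \<Longrightarrow> y \<in> Zh B dh m \<Longrightarrow> x - y \<in> Zh B dh m"
  unfolding Zh_def by (simp add: diff_mem dh_diff)

text \<open>The paper's X^m is the kernel of dv \<circ> dh; by anticommutativity it is also the kernel
  of dh \<circ> dv, which is the form in which horizontal exactness applies.\<close>
definition X :: "nat \<Rightarrow> 'v set" where
  "X m = {x \<in> B (- int m) (int m). dh (- int m) (int m + 1) (dv (- int m) (int m) x) = 0}"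

lemma Zh_subset_X: "Zh B dh m \<subseteq> X m"
proof
  fix x assume "x \<in> Zh B dh m"
  then have x: "x \<in> B (- int m) (int m)" and "dh (- int m) (int m) x = 0"
    unfolding Zh_def by auto
  then show "x \<in> X m"
    using dh_dv_anticomm[OF x] unfolding X_def by simp
qed

end

locale complemented_bicomplex = bicomplex B dh dv
  for B :: "int \<Rightarrow> int \<Rightarrow> 'v::ab_group_add set" and dh dv +
  fixes D :: "nat \<Rightarrow> 'v set"
  assumes dh_exact_deg1: "p + q = 1 \<Longrightarrow> x \<in> B p q \<Longrightarrow> dh p q x = 0 \<Longrightarrow>
      \<exists>y \<in> B (p - 1) q. dh (p - 1) q y = x"
    and D_diff: "x \<in> D m \<Longrightarrow> y \<in> D m \<Longrightarrow> x - y \<in> D m"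
    and D_subset: "D m \<subseteq> B (- int m) (int m)"
    and D_inter_Zh: "D m \<inter> Zh B dh m = {0}"
    and Zh_plus_D: "b \<in> B (- int m) (int m) \<Longrightarrow> \<exists>y \<in> Zh B dh m. \<exists>d \<in> D m. b = y + d"
begin

lemma proj_unique:
  assumes "b \<in> B (- int m) (int m)"
  shows "\<exists>!d. d \<in> D m \<and> b - d \<in> Zh B dh m"
proof -
  obtain y d where y: "y \<in> Zh B dh m" and d: "d \<in> D m" and b: "b = y + d"
    using Zh_plus_D[OF assms] by blast
  have "d' = d" if "d' \<in> D m" and "b - d' \<in> Zh B dh m" for d'
  proof -
    have "d' - d = (b - d) - (b - d')"
      by simp
    then have "d' - d \<in> Zh B dh m"
      using Zh_diff[of "b - d" m "b - d'"] y b that(2) by simp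
    moreover have "d' - d \<in> D m"
      using D_diff[OF that(1) d] .
    ultimately have "d' - d = 0"
      using D_inter_Zh[of m] by blast
    then show ?thesis
      by simp
  qed
  then show ?thesis
    using y d b by auto
qed

lemma proj_mem:
  assumes "b \<in> B (- int m) (int m)"
  shows "proj B dh D m b \<in> D m" and "b - proj B dh D m b \<in> Zh B dh m"
  using theI'[OF proj_unique[OF assms]] unfolding proj_def by auto

lemma Uop_mem_dh_Uop:
  assumes "x \<in> X m"
  shows "Uop B dh dv D m x \<in> B (- int m - 1) (int m + 1)"
    and "dh (- int m - 1) (int m + 1) (Uop B dh dv D m x) = dv (- int m) (int m) x"
proof -
  let ?lift = "\<lambda>u. u \<in> B (- int m - 1) (int m + 1)
      \<and> dh (- int m - 1) (int m + 1) u = dv (- int m) (int m) x"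
  have x: "x \<in> B (- int m) (int m)"
      and "dh (- int m) (int m + 1) (dv (- int m) (int m) x) = 0"
    using assms unfolding X_def by auto
  then have "\<exists>u. ?lift u"
    using dh_exact_deg1[of "- int m" "int m + 1", OF _ dv_maps[OF x]] by auto
  then have u: "?lift (SOME u. ?lift u)"
    by (rule someI_ex)
  define u where "u = (SOME u. ?lift u)"
  have Suc_idx: "- int m - 1 = - int (Suc m)" "int m + 1 = int (Suc m)"
    by simp_all
  have U: "Uop B dh dv D m x \<in> D (Suc m)"
      and ker: "u - Uop B dh dv D m x \<in> Zh B dh (Suc m)"
    using u proj_mem[of u "Suc m"] unfolding u_def Uop_def Suc_idx by auto
  show UB: "Uop B dh dv D m x \<in> B (- int m - 1) (int m + 1)"
    using D_subset[of "Suc m"] U unfolding Suc_idx by blast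
  have "dh (- int m - 1) (int m + 1) (u - Uop B dh dv D m x) = 0"
    using ker unfolding Zh_def Suc_idx by blast
  then show "dh (- int m - 1) (int m + 1) (Uop B dh dv D m x) = dv (- int m) (int m) x"
    using u dh_diff[OF _ UB, of u] unfolding u_def by simp
qed

lemma X_Suc: "X (Suc m) = {x \<in> B (- int m - 1) (int m + 1).
    dh (- int m - 1) (int m + 1 + 1) (dv (- int m - 1) (int m + 1) x) = 0}"
proof -
  have "- int (Suc m) = - int m - 1" "int (Suc m) = int m + 1"
    by simp_all
  then show ?thesis
    unfolding X_def by (simp only:)
qed

lemma Uop_X:
  assumes "x \<in> X m"
  shows "Uop B dh dv D m x \<in> X (Suc m)"
proof -
  note U = Uop_mem_dh_Uop[OF assms]
  have "x \<in> B (- int m) (int m)"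
    using assms unfolding X_def by simp
  then have "dv (- int m - 1 + 1) (int m + 1) (dh (- int m - 1) (int m + 1) (Uop B dh dv D m x)) = 0"
    using U(2) dv_dv by simp
  then have "dh (- int m - 1) (int m + 1 + 1) (dv (- int m - 1) (int m + 1) (Uop B dh dv D m x)) = 0"
    using dh_dv_anticomm[OF U(1)] by (simp add: add_eq_0_iff)
  then show ?thesis
    using U(1) unfolding X_Suc by blast
qed

lemma Uiter_X: "z \<in> X n \<Longrightarrow> Uiter B dh dv D n k z \<in> X (n + k)"
  by (induction k) (simp_all add: Uop_X)

lemma dh_Uiter_Suc:
  assumes "z \<in> X n"
  shows "dh (- int (n + k) - 1) (int (n + k) + 1) (Uiter B dh dv D n (Suc k) z)
    = dv (- int (n + k)) (int (n + k)) (Uiter B dh dv D n k z)"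
  using Uop_mem_dh_Uop(2)[OF Uiter_X[OF assms]] by simp

lemma Uiter_Suc_mem:
  "z \<in> X n \<Longrightarrow> Uiter B dh dv D n (Suc k) z \<in> B (- int (n + k) - 1) (int (n + k) + 1)"
  using Uop_mem_dh_Uop(1)[OF Uiter_X] by simp

lemma Uiter_mem: "z \<in> X n \<Longrightarrow> Uiter B dh dv D n k z \<in> B (- int (n + k)) (int (n + k))"
  using Uiter_X unfolding X_def by blast

lemma beta_mem:
  assumes "z \<in> X n"
  shows "beta B dh dv D n z p \<in> B p (- p)"
proof (cases "p \<le> - int n")
  case True
  then obtain k where p: "p = - int (n + k)"
    by (rule le_minus_int_cases)
  show ?thesis
    using Uiter_mem[OF assms, of k] minus_mem unfolding p beta_at by (simp add: ac_simps)
qed (simp add: beta_eq_0_above zero_mem)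

lemma finite_support_beta:
  assumes "z \<in> X n" and "\<exists>N. \<forall>p q. p < N \<longrightarrow> B p q = {0}"
  shows "finite {p. beta B dh dv D n z p \<noteq> 0}"
proof -
  obtain N where N: "\<forall>p q. p < N \<longrightarrow> B p q = {0}"
    using assms(2) ..
  have "beta B dh dv D n z p = 0" if "p < N \<or> - int n < p" for p
    using that beta_mem[OF assms(1), of p] N beta_eq_0_above by auto
  then have "{p. beta B dh dv D n z p \<noteq> 0} \<subseteq> {N .. - int n}"
    by force
  then show ?thesis
    by (rule finite_subset) simp
qed

lemma totald_beta_eq_0:
  assumes z: "z \<in> Zh B dh n"
  shows "totald dh dv 0 (beta B dh dv D n z) p = 0"
proof -
  have zX: "z \<in> X n"
    using z Zh_subset_X by blast
  consider "1 - int n < p" | "p = 1 - int n" | k where "p = - int (n + k)"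
  proof (cases "p \<le> - int n")
    case True
    then show thesis
      by (rule le_minus_int_cases) (rule that(3))
  qed (use that in linarith)+
  then show ?thesis
  proof cases
    case 1
    then show ?thesis
      unfolding totald_def by (simp add: beta_eq_0_above)
  next
    case 2
    then have "beta B dh dv D n z (p - 1) = z"
      using beta_at[of B dh dv D n z 0] by simp
    then show ?thesis
      using 2 z unfolding totald_def Zh_def by (simp add: beta_eq_0_above)
  next
    case (3 k)
    let ?U = "\<lambda>j. Uiter B dh dv D n j z"
    have idx: "0 - (p - 1) = int (n + k) + 1" "0 - p = int (n + k)"
        "- int (n + Suc k) = - int (n + k) - 1"
      using 3 by simp_all
    have "totald dh dv 0 (beta B dh dv D n z) p
        = dh (- int (n + k) - 1) (int (n + k) + 1) (beta B dh dv D n z (- int (n + Suc k)))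
          + dv (- int (n + k)) (int (n + k)) (beta B dh dv D n z (- int (n + k)))"
      unfolding totald_def idx(1,2) unfolding idx(3) 3 ..
    also have "\<dots> = (if even k then dv (- int (n + k)) (int (n + k)) (?U k)
          - dh (- int (n + k) - 1) (int (n + k) + 1) (?U (Suc k))
        else dh (- int (n + k) - 1) (int (n + k) + 1) (?U (Suc k))
          - dv (- int (n + k)) (int (n + k)) (?U k))"
      unfolding beta_at
      using dh_minus[OF Uiter_Suc_mem[OF zX]] dv_minus[OF Uiter_mem[OF zX]] by simp
    also have "\<dots> = 0"
      using dh_Uiter_Suc[OF zX] by simp
    finally show ?thesis .
  qed
qed

end

theorem lemma5p2:
  fixes scale :: "'k::field \<Rightarrow> 'v::ab_group_add \<Rightarrow> 'v"
    and B :: "int \<Rightarrow> int \<Rightarrow> 'v set"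
    and dh dv :: "int \<Rightarrow> int \<Rightarrow> 'v \<Rightarrow> 'v"
    and D :: "nat \<Rightarrow> 'v set"
    and n :: nat and z :: 'v
  assumes vs: "Vector_Spaces.vector_space scale"
    and sub: "\<And>p q. module.subspace scale (B p q)"
    and dh_maps: "\<And>p q x. x \<in> B p q \<Longrightarrow> dh p q x \<in> B (p + 1) q"
    and dv_maps: "\<And>p q x. x \<in> B p q \<Longrightarrow> dv p q x \<in> B p (q + 1)"
    and dh_add: "\<And>p q x y. x \<in> B p q \<Longrightarrow> y \<in> B p q \<Longrightarrow> dh p q (x + y) = dh p q x + dh p q y"
    and dh_scale: "\<And>p q c x. x \<in> B p q \<Longrightarrow> dh p q (scale c x) = scale c (dh p q x)"
    and dv_add: "\<And>p q x y. x \<in> B p q \<Longrightarrow> y \<in> B p q \<Longrightarrow> dv p q (x + y) = dv p q x + dv p q y"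
    and dv_scale: "\<And>p q c x. x \<in> B p q \<Longrightarrow> dv p q (scale c x) = scale c (dv p q x)"
    and dhdh: "\<And>p q x. x \<in> B p q \<Longrightarrow> dh (p + 1) q (dh p q x) = 0"
    and dvdv: "\<And>p q x. x \<in> B p q \<Longrightarrow> dv p (q + 1) (dv p q x) = 0"
    and anti: "\<And>p q x. x \<in> B p q \<Longrightarrow> dh p (q + 1) (dv p q x) + dv (p + 1) q (dh p q x) = 0"
    and supp: "\<And>p q. \<not> (0 \<le> - p \<and> - p \<le> q) \<Longrightarrow> B p q = {0}"
    and bnd: "\<exists>N. \<forall>p q. p < N \<longrightarrow> B p q = {0}"
    and acyc: "\<And>p q x. p + q \<noteq> 0 \<Longrightarrow> x \<in> B p q \<Longrightarrow> dh p q x = 0 \<Longrightarrow>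
                 \<exists>y \<in> B (p - 1) q. dh (p - 1) q y = x"
    and D_sub: "\<And>m. module.subspace scale (D m)"
    and D_in: "\<And>m. D m \<subseteq> B (- int m) (int m)"
    and D_int: "\<And>m. D m \<inter> Zh B dh m = {0}"
    and D_span: "\<And>m b. b \<in> B (- int m) (int m) \<Longrightarrow> \<exists>y \<in> Zh B dh m. \<exists>d \<in> D m. b = y + d"
    and z: "z \<in> Zh B dh n"
  shows "is_total_cochain B 0 (beta B dh dv D n z)
       \<and> (\<forall>p. totald dh dv 0 (beta B dh dv D n z) p = 0)
       \<and> (\<forall>p. - int n < p \<longrightarrow> beta B dh dv D n z p = 0)
       \<and> beta B dh dv D n z (- int n) = z"
proof -
  interpret V: vector_space scale
    by (rule vs)
  interpret complemented_bicomplex B dh dv D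
    by unfold_locales
      (auto simp: dh_add dv_add dvdv anti D_int
        intro: V.subspace_0[OF sub] V.subspace_diff[OF sub] V.subspace_diff[OF D_sub]
          dh_maps dv_maps acyc D_span D_in[THEN subsetD])
  have zX: "z \<in> X n"
    using z Zh_subset_X by blast
  show ?thesis
    unfolding is_total_cochain_def
    using beta_mem[OF zX] finite_support_beta[OF zX bnd] totald_beta_eq_0[OF z]
      beta_eq_0_above beta_at[of B dh dv D n z 0]
    by auto
qed

end
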